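(* Suppose $\|\phi-\phi^\star\|_H\le\frac{\|(I-P_G)H^{-1/2}\Sigma^{-1/2}\|_2}{3L\,\|H^{-1/2}\Sigma^{-1/2}\|_2}$ and $\|P_GH^{-1/2}(w-w^\star)\|_2\le\frac{1}{12L}$. Then, with $$c:=\frac{5}{\sqrt d}\,\|w^\star\|_\Sigma\,\big\|(I-P_G)H^{-1/2}\Sigma^{-1/2}\big\|_2^2,$$ we have $$\|\phi-\phi^\star\|_{\Sigma^{-1}}\le c\sqrt d\,\frac{\|w-w^\star\|_\Sigma}{\|w^\star\|_\Sigma}\qquad\text{and}\qquad w^\top(\phi-\phi^\star)\le c\sqrt d\,\|w^\star\|_\Sigma\Big\{\frac{\|w-w^\star\|_\Sigma}{\|w^\star\|_\Sigma}\Big\}^2.$$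
   Context: Let $m\le d$ and $g=(g_1,\dots,g_m):\mathbb R^d\to\mathbb R^m$, each $g_i$ strongly convex and twice differentiable; $\Phi=\{x\in\mathbb R^d:g(x)\le0\}$; $\nabla g(x)\in\mathbb R^{m\times d}$ is the Jacobian (rows $\nabla g_i(x)^\top$). For $w^\star,w\in\mathbb R^d$ let $\phi^\star=\arg\max_{x\in\Phi}x^\top w^\star$ and $\phi=\arg\max_{x\in\Phi}x^\top w$, with all constraints active: $g(\phi^\star)=g(\phi)=0$. Let $\lambda^\star,\lambda\in\mathbb R^m_{\ge0}$ be Lagrange (KKT) multipliers with $w^\star=\nabla g(\phi^\star)^\top\lambda^\star$, $w=\nabla g(\phi)^\top\lambda$. $H=\sum_{i=1}^m\lambda^\star_i\nabla^2g_i(\phi^\star)$, assumed positive definite; $\|x\|_M=\sqrt{x^\top Mx}$. $W=\nabla g(\phi^\star)H^{-1}\nabla g(\phi^\star)^\top\in\mathbb R^{m\times m}$, assumed invertible. $P_G=H^{-1/2}\nabla g(\phi^\star)^\top W^{-1}\nabla g(\phi^\star)H^{-1/2}$ (orthogonal projection onto the span of the columns of $H^{-1/2}\nabla g(\phi^\star)^\top$). Smoothness: (S1) $\|\{\nabla g(\phi)-\nabla g(\phi^\star)\}^\top\lambda^\star-H(\phi-\phi^\star)\|_{H^{-1}}\le\frac14\|\phi-\phi^\star\|_H$; (S2) there is $L>0$ with $\|W^{-1/2}\{\nabla g(x)-\nabla g(\phi^\star)\}H^{-1/2}\|_2\le L\|x-\phi^\star\|_H$ for all $x\in\mathbb R^d$.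 $\Sigma\in\mathbb R^{d\times d}$ is a positive definite matrix (the feature covariance under the optimal policy's occupation measure). *)

theory Defs
  imports "HOL-Analysis.Analysis"
begin

definition pos_def_mat :: "real^'n^'n \<Rightarrow> bool" where
  "pos_def_mat M \<longleftrightarrow> transpose M = M \<and> (\<forall>x. x \<noteq> 0 \<longrightarrow> x \<bullet> (M *v x) > 0)"

definition psd_mat :: "real^'n^'n \<Rightarrow> bool" where
  "psd_mat M \<longleftrightarrow> transpose M = M \<and> (\<forall>x. x \<bullet> (M *v x) \<ge> 0)"

definition msqrt :: "real^'n^'n \<Rightarrow> real^'n^'n" where
  "msqrt M = (THE S. psd_mat S \<and> S ** S = M)"

definition minvsqrt :: "real^'n^'n \<Rightarrow> real^'n^'n" where
  "minvsqrt M = matrix_inv (msqrt M)"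

definition wnorm :: "real^'n \<Rightarrow> real^'n^'n \<Rightarrow> real" where
  "wnorm x M = sqrt (x \<bullet> (M *v x))"

definition opnorm2 :: "real^'n^'m \<Rightarrow> real" where
  "opnorm2 A = onorm (\<lambda>x. A *v x)"

end

theory Submission
  imports Defs
begin

text \<open>
  Write \<open>u = H^(1/2) (phi - phistar)\<close>, so that \<open>|u| = ||phi - phistar||_H\<close>, and
  \<open>Q = H^(-1/2) J^T W^(-1/2)\<close> with \<open>J\<close> the Jacobian at \<open>phistar\<close>; \<open>Q\<close> is an isometry
  with \<open>P_G = Q Q^T\<close>. Subtracting the two KKT conditions gives
  \<open>H^(-1/2) (w - wstar) = Q z + k + u + e\<close> with \<open>z = W^(1/2) (lam - lamstar)\<close>,
  where (S2) gives \<open>|k| \<le> L |u| |z|\<close> and (S1) gives \<open>|e| \<le> |u| / 4\<close>.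
  Since \<open>g phi = g phistar\<close>, a second order argument along the segment shows that the
  normal component \<open>Q^T u\<close> is only of size \<open>L |u|^2 / 2\<close>. Projecting the decomposition
  onto the range of \<open>Q\<close> bounds \<open>|z|\<close>, and projecting it onto the complement then shows that
  \<open>(I - P_G) H^(-1/2) (w - wstar)\<close> controls \<open>u\<close>; passing to the \<open>Sigma\<close>-norms costs the factor
  \<open>||(I - P_G) H^(-1/2) Sigma^(-1/2)||\<close> twice. The second bound follows from the first because
  \<open>wstar\<^sup>T (phi - phistar) \<le> 0\<close> by optimality of \<open>phistar\<close>.

  The matrix square roots in the statement exist and are unique: existence comes from the binomial
  series of \<open>1 - sqrt (1 - x)\<close> applied to a rescaled contraction.
\<close>

\<comment> \<open>Keep \<open>transpose A *v x\<close> as it is; the library simp rule would rewrite it to \<open>x v* A\<close>.\<close>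
declare transpose_matrix_vector [simp del]

section \<open>Matrix algebra\<close>

lemma transpose_diff: "transpose (A - B) = transpose A - transpose (B :: real^'n^'m)"
  by (simp add: vec_eq_iff transpose_def)

lemma matrix_diff_ldistrib: "A ** (B - C) = A ** B - A ** (C :: real^'p^'n)"
  by (simp add: vec_eq_iff matrix_matrix_mult_def sum_subtractf algebra_simps)

lemma matrix_diff_rdistrib: "(A - B) ** C = A ** C - B ** (C :: real^'p^'n)"
  by (simp add: vec_eq_iff matrix_matrix_mult_def sum_subtractf algebra_simps)

lemma matrix_add_rdistrib: "(A + B) ** C = A ** C + B ** (C :: real^'p^'n)"
  by (simp add: vec_eq_iff matrix_matrix_mult_def sum.distrib algebra_simps)

lemma inner_transpose_matrix: "(transpose M *v y) \<bullet> x = y \<bullet> ((M :: real^'n^'m) *v x)"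
  by (simp add: dot_lmul_matrix transpose_matrix_vector)

lemma inner_symmetric_matrix:
  "transpose M = M \<Longrightarrow> (M *v y) \<bullet> x = y \<bullet> ((M :: real^'n^'n) *v x)"
  by (metis inner_transpose_matrix)

lemma matrix_inv_inverse:
  assumes "invertible (M :: real^'n^'m)"
  shows "M ** matrix_inv M = mat 1" and "matrix_inv M ** M = mat 1"
  using someI_ex[OF assms[unfolded invertible_def]] by (auto simp: matrix_inv_def)

lemma matrix_inv_unique:
  assumes "invertible (M :: real^'n^'m)" and "N ** M = mat 1"
  shows "N = matrix_inv M"
proof -
  have "N = N ** (M ** matrix_inv M)"
    by (simp add: matrix_inv_inverse(1)[OF assms(1)])
  also have "\<dots> = matrix_inv M"
    by (simp add: matrix_mul_assoc assms(2))
  finally show ?thesis .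
qed

lemma sums_matrixI:
  fixes f :: "nat \<Rightarrow> real^'n^'m"
  assumes "\<And>i j. (\<lambda>k. f k $ i $ j) sums (S $ i $ j)"
  shows "f sums S"
  using assms unfolding sums_def by (intro vec_tendstoI) simp

lemma bounded_linear_matrix_mult_left: "bounded_linear (\<lambda>X :: real^'p^'n. C ** X)"
  by (rule linear_conv_bounded_linear[THEN iffD1], rule linearI)
     (simp_all add: matrix_add_ldistrib matrix_scalar_ac scalar_matrix_assoc)

lemma bounded_linear_matrix_mult_right: "bounded_linear (\<lambda>X :: real^'n^'m. X ** C)"
  by (rule linear_conv_bounded_linear[THEN iffD1], rule linearI)
     (simp_all add: vec_eq_iff matrix_matrix_mult_def sum.distrib algebra_simps sum_distrib_left)

lemma bounded_linear_transpose: "bounded_linear (transpose :: real^'n^'m \<Rightarrow> real^'m^'n)"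
  by (rule linear_conv_bounded_linear[THEN iffD1], rule linearI)
     (simp_all add: vec_eq_iff transpose_def)

lemma bounded_linear_quadratic_form: "bounded_linear (\<lambda>X :: real^'n^'n. x \<bullet> (X *v x))"
  by (rule linear_conv_bounded_linear[THEN iffD1], rule linearI)
     (simp_all add: matrix_vector_mult_add_rdistrib inner_add_right scaleR_matrix_vector_assoc[symmetric])

lemma opnorm2_bound: "norm ((M :: real^'n^'m) *v x) \<le> opnorm2 M * norm x"
  unfolding opnorm2_def by (rule onorm[OF matrix_vector_mul_bounded_linear])

lemma opnorm2_nonneg: "0 \<le> opnorm2 (M :: real^'n^'m)"
  unfolding opnorm2_def by (rule onorm_pos_le[OF matrix_vector_mul_bounded_linear])

lemma opnorm2_le: "(\<And>x. norm ((M :: real^'n^'m) *v x) \<le> c * norm x) \<Longrightarrow> opnorm2 M \<le> c"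
  unfolding opnorm2_def by (rule onorm_le)

lemma opnorm2_transpose_bound: "norm (transpose (M :: real^'n^'m) *v y) \<le> opnorm2 M * norm y"
proof -
  let ?z = "transpose M *v y"
  have "?z \<bullet> ?z = y \<bullet> (M *v ?z)"
    by (rule inner_transpose_matrix)
  also have "\<dots> \<le> norm y * (opnorm2 M * norm ?z)"
    using norm_cauchy_schwarz[of y "M *v ?z"] opnorm2_bound[of M ?z]
    by (meson mult_left_mono norm_ge_zero order_trans)
  finally have "norm ?z * norm ?z \<le> (opnorm2 M * norm y) * norm ?z"
    by (simp add: dot_square_norm power2_eq_square algebra_simps)
  then show ?thesis
    by (cases "norm ?z = 0") (auto simp: opnorm2_nonneg)
qed

section \<open>The binomial series of the square root\<close>

text \<open>
  The Taylor coefficients of \<open>f x = 1 - sqrt (1 - x)\<close>; the recursion is \<open>f\<^sup>2 = 2 f - x\<close>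
  read off coefficientwise.
\<close>
function sqrt_coeff :: "nat \<Rightarrow> real" where
  "sqrt_coeff n =
     (if n = 0 then 0 else if n = 1 then 1/2
      else (\<Sum>j\<in>{1..<n}. sqrt_coeff j * sqrt_coeff (n - j)) / 2)"
  by auto
termination by (relation "Wellfounded.measure id") auto

declare sqrt_coeff.simps [simp del]

lemma sqrt_coeff_0 [simp]: "sqrt_coeff 0 = 0"
  by (simp add: sqrt_coeff.simps)

lemma sqrt_coeff_nonneg: "0 \<le> sqrt_coeff n"
proof (induction n rule: less_induct)
  case (less n)
  then show ?case
    by (subst sqrt_coeff.simps) (auto intro!: sum_nonneg)
qed

lemma sqrt_coeff_convolution:
  "(\<Sum>j\<le>k. sqrt_coeff j * sqrt_coeff (k - j)) = 2 * sqrt_coeff k - (if k = 1 then 1 else 0)"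
proof -
  consider "k = 0" | "k = 1" | "k \<ge> 2" by linarith
  then show ?thesis
  proof cases
    case 3
    then have "{..k} = insert 0 (insert k {1..<k})" by auto
    then have "(\<Sum>j\<le>k. sqrt_coeff j * sqrt_coeff (k - j))
               = (\<Sum>j\<in>{1..<k}. sqrt_coeff j * sqrt_coeff (k - j))"
      using 3 by simp
    also have "\<dots> = 2 * sqrt_coeff k"
      using 3 by (subst (2) sqrt_coeff.simps) simp
    finally show ?thesis using 3 by simp
  qed (auto simp: atMost_Suc sqrt_coeff.simps)
qed

lemma sum_sqrt_coeff_pairs:
  "(\<Sum>(j, l)\<in>{(j, l). j + l < N}. sqrt_coeff j * sqrt_coeff l)
     = 2 * (\<Sum>k<N. sqrt_coeff k) - (if N \<ge> 2 then 1 else 0)"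
proof -
  have "(\<Sum>(j, l)\<in>{(j, l). j + l < N}. sqrt_coeff j * sqrt_coeff l)
        = (\<Sum>k<N. \<Sum>j\<le>k. sqrt_coeff j * sqrt_coeff (k - j))"
    by (rule sum.triangle_reindex)
  also have "\<dots> = (\<Sum>k<N. 2 * sqrt_coeff k - (if k = 1 then 1 else 0))"
    by (simp add: sqrt_coeff_convolution)
  also have "\<dots> = 2 * (\<Sum>k<N. sqrt_coeff k) - (if N \<ge> 2 then 1 else 0)"
    by (simp add: sum_subtractf sum_distrib_left)
  finally show ?thesis .
qed

lemma sum_sqrt_coeff_le_1: "(\<Sum>k<N. sqrt_coeff k) \<le> 1"
proof (induction N rule: less_induct)
  case (less N)
  show ?case
  proof (cases "N \<ge> 2")
    case True
    let ?a = sqrt_coeff and ?s = "\<Sum>k<N - 1. sqrt_coeff k"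
    have fin: "finite {(j, l). j + l < N}"
      by (rule finite_subset[of _ "{..<N} \<times> {..<N}"]) auto
    \<comment> \<open>pairs with a zero index contribute nothing, the others have both indices below N - 1\<close>
    have "(\<Sum>(j, l)\<in>{(j, l). j + l < N}. ?a j * ?a l)
          = (\<Sum>(j, l)\<in>{(j, l). j + l < N \<and> 0 < j \<and> 0 < l}. ?a j * ?a l)"
      by (rule sum.mono_neutral_right[OF fin]) (auto intro!: gr0I)
    also have "\<dots> \<le> (\<Sum>(j, l)\<in>{..<N - 1} \<times> {..<N - 1}. ?a j * ?a l)"
      by (rule sum_mono2) (auto simp: sqrt_coeff_nonneg)
    also have "\<dots> = ?s\<^sup>2"
      by (simp add: power2_eq_square sum_product sum.cartesian_product)
    also have "\<dots> \<le> 1"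
      using less[of "N - 1"] True by (simp add: power_le_one sum_nonneg sqrt_coeff_nonneg)
    finally show ?thesis
      using True by (simp add: sum_sqrt_coeff_pairs)
  qed (auto simp: le_Suc_eq numeral_2_eq_2 sqrt_coeff.simps)
qed

lemma summable_sqrt_coeff: "summable sqrt_coeff"
  by (rule summableI_nonneg_bounded[where x = 1]) (auto simp: sqrt_coeff_nonneg sum_sqrt_coeff_le_1)

primrec matpow :: "real^'n^'n \<Rightarrow> nat \<Rightarrow> real^'n^'n" where
  "matpow B 0 = mat 1"
| "matpow B (Suc k) = B ** matpow B k"

lemma matpow_add: "matpow B (j + l) = matpow B j ** matpow B l"
  by (induction j) (simp_all add: matrix_mul_assoc)

lemma matpow_commute:
  assumes "C ** B = B ** C"
  shows "C ** matpow B k = matpow B k ** C"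
proof (induction k)
  case (Suc k)
  have "C ** (B ** matpow B k) = B ** (C ** matpow B k)"
    by (metis assms matrix_mul_assoc)
  then show ?case by (simp add: Suc matrix_mul_assoc)
qed simp

lemma transpose_matpow:
  assumes "transpose B = B"
  shows "transpose (matpow B k) = matpow B k"
  by (induction k) (simp_all add: matrix_transpose_mul assms matpow_commute[of B B])

lemma norm_matpow_le:
  assumes "\<And>x. norm (B *v x) \<le> norm x"
  shows "norm (matpow B k *v x) \<le> norm x"
proof (induction k)
  case (Suc k)
  then show ?case
    using assms[of "matpow B k *v x"] by (simp add: matrix_vector_mul_assoc[symmetric])
qed simp

lemma abs_matpow_entry_le:
  assumes "\<And>x. norm (B *v x) \<le> norm x"
  shows "\<bar>matpow B k $ i $ j\<bar> \<le> 1"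
proof -
  have "onorm ((*v) (matpow B k)) \<le> 1"
    by (rule onorm_le) (simp add: norm_matpow_le[OF assms])
  then show ?thesis
    using matrix_component_le_onorm[of "matpow B k" i j] by simp
qed

text \<open>For a contraction \<open>B\<close> this is \<open>1 - sqrt (1 - B)\<close>.\<close>
definition sqrt_series :: "real^'n^'n \<Rightarrow> real^'n^'n" where
  "sqrt_series B = (\<chi> i j. \<Sum>k. sqrt_coeff k * matpow B k $ i $ j)"

context
  fixes B :: "real^'n^'n"
  assumes contraction: "\<And>x. norm (B *v x) \<le> norm x"
begin

lemma summable_sqrt_series_entry: "summable (\<lambda>k. norm (sqrt_coeff k * matpow B k $ i $ j))"
proof (rule summable_comparison_test'[OF summable_sqrt_coeff])
  fix k
  show "norm (norm (sqrt_coeff k * matpow B k $ i $ j)) \<le> sqrt_coeff k"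
    using mult_left_mono[OF abs_matpow_entry_le[OF contraction] sqrt_coeff_nonneg]
    by (simp add: abs_mult sqrt_coeff_nonneg)
qed

lemma sqrt_series_entry_sums: "(\<lambda>k. sqrt_coeff k * matpow B k $ i $ j) sums sqrt_series B $ i $ j"
  using summable_norm_cancel[OF summable_sqrt_series_entry]
  by (simp add: sqrt_series_def summable_sums)

lemma sqrt_series_sums: "(\<lambda>k. sqrt_coeff k *\<^sub>R matpow B k) sums sqrt_series B"
  by (rule sums_matrixI) (simp add: sqrt_series_entry_sums)

lemma sqrt_series_square_entry_sums:
  "(\<lambda>n. (2 * sqrt_coeff n - (if n = 1 then 1 else 0)) * matpow B n $ i $ j)
     sums (sqrt_series B ** sqrt_series B) $ i $ j"
proof -
  let ?a = sqrt_coeff and ?P = "matpow B" and ?R = "sqrt_series B"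
  have "(\<lambda>n. \<Sum>l\<in>UNIV. \<Sum>k\<le>n. (?a k * ?P k $ i $ l) * (?a (n - k) * ?P (n - k) $ l $ j))
          sums (\<Sum>l\<in>UNIV. ?R $ i $ l * ?R $ l $ j)"
    using Cauchy_product_sums[OF summable_sqrt_series_entry summable_sqrt_series_entry]
    by (intro sums_sum) (simp add: sqrt_series_def)
  moreover have "(\<Sum>l\<in>UNIV. \<Sum>k\<le>n. (?a k * ?P k $ i $ l) * (?a (n - k) * ?P (n - k) $ l $ j))
                 = (\<Sum>k\<le>n. ?a k * ?a (n - k)) * ?P n $ i $ j" for n
  proof -
    have "(\<Sum>l\<in>UNIV. \<Sum>k\<le>n. (?a k * ?P k $ i $ l) * (?a (n - k) * ?P (n - k) $ l $ j))
          = (\<Sum>k\<le>n. ?a k * ?a (n - k) * (?P k ** ?P (n - k)) $ i $ j)"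
      by (subst sum.swap) (simp add: matrix_matrix_mult_def sum_distrib_left mult_ac)
    also have "\<dots> = (\<Sum>k\<le>n. ?a k * ?a (n - k) * ?P n $ i $ j)"
      by (intro sum.cong refl) (simp add: matpow_add[symmetric])
    finally show ?thesis by (simp add: sum_distrib_right)
  qed
  ultimately show ?thesis
    by (simp add: sqrt_coeff_convolution matrix_matrix_mult_def)
qed

lemma sqrt_series_square: "sqrt_series B ** sqrt_series B = 2 *\<^sub>R sqrt_series B - B"
proof -
  let ?a = sqrt_coeff and ?P = "matpow B" and ?R = "sqrt_series B"
  have "(\<lambda>n. (2 * ?a n - (if n = 1 then 1 else 0)) * ?P n $ i $ j) sums (2 *\<^sub>R ?R - B) $ i $ j"
    for i j
  proof -
    have "(\<lambda>n. 2 * (?a n * ?P n $ i $ j) - (if n = 1 then ?P n $ i $ j else 0))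
            sums (2 * ?R $ i $ j - ?P 1 $ i $ j)"
      by (intro sums_diff sums_mult sqrt_series_entry_sums sums_single)
    moreover have "(\<lambda>n. (2 * ?a n - (if n = 1 then 1 else 0)) * ?P n $ i $ j)
                   = (\<lambda>n. 2 * (?a n * ?P n $ i $ j) - (if n = 1 then ?P n $ i $ j else 0))"
      by (simp add: fun_eq_iff algebra_simps)
    ultimately show ?thesis by simp
  qed
  then show ?thesis
    unfolding vec_eq_iff using sums_unique2[OF sqrt_series_square_entry_sums] by blast
qed

lemma sqrt_series_commute:
  assumes "C ** B = B ** C"
  shows "C ** sqrt_series B = sqrt_series B ** C"
proof -
  have "(\<lambda>k. C ** (sqrt_coeff k *\<^sub>R matpow B k)) sums (C ** sqrt_series B)"
    by (rule bounded_linear.sums[OF bounded_linear_matrix_mult_left sqrt_series_sums])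
  moreover have "(\<lambda>k. (sqrt_coeff k *\<^sub>R matpow B k) ** C) sums (sqrt_series B ** C)"
    by (rule bounded_linear.sums[OF bounded_linear_matrix_mult_right sqrt_series_sums])
  ultimately show ?thesis
    by (simp add: matrix_scalar_ac scalar_matrix_assoc[symmetric] matpow_commute[OF assms]
        sums_unique2)
qed

lemma transpose_sqrt_series:
  assumes "transpose B = B"
  shows "transpose (sqrt_series B) = sqrt_series B"
  using bounded_linear.sums[OF bounded_linear_transpose sqrt_series_sums] sqrt_series_sums
  by (simp add: transpose_scalar transpose_matpow[OF assms] sums_unique2)

lemma quadratic_sqrt_series_le: "x \<bullet> (sqrt_series B *v x) \<le> x \<bullet> x"
proof -
  have sums: "(\<lambda>k. sqrt_coeff k * (x \<bullet> (matpow B k *v x))) sums (x \<bullet> (sqrt_series B *v x))"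
    using bounded_linear.sums[OF bounded_linear_quadratic_form sqrt_series_sums, of x]
    by (simp add: scaleR_matrix_vector_assoc[symmetric])
  have "sqrt_coeff k * (x \<bullet> (matpow B k *v x)) \<le> sqrt_coeff k * (x \<bullet> x)" for k
  proof (rule mult_left_mono[OF _ sqrt_coeff_nonneg])
    have "x \<bullet> (matpow B k *v x) \<le> norm x * norm (matpow B k *v x)"
      by (rule norm_cauchy_schwarz)
    also have "\<dots> \<le> norm x * norm x"
      by (rule mult_left_mono[OF norm_matpow_le[OF contraction]]) simp
    finally show "x \<bullet> (matpow B k *v x) \<le> x \<bullet> x"
      by (simp add: dot_square_norm power2_eq_square)
  qed
  then have "x \<bullet> (sqrt_series B *v x) \<le> (\<Sum>k. sqrt_coeff k) * (x \<bullet> x)"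
    by (rule sums_le[OF _ sums sums_mult2[OF summable_sums[OF summable_sqrt_coeff]]])
  also have "\<dots> \<le> x \<bullet> x"
    using mult_right_mono[OF suminf_le_const[OF summable_sqrt_coeff sum_sqrt_coeff_le_1], of "x \<bullet> x"]
    by simp
  finally show ?thesis .
qed

lemma psd_id_minus_sqrt_series:
  assumes "transpose B = B"
  shows "psd_mat (mat 1 - sqrt_series B)"
  using quadratic_sqrt_series_le transpose_sqrt_series[OF assms]
  by (simp add: psd_mat_def transpose_diff matrix_vector_mult_diff_rdistrib inner_diff_right)

lemma id_minus_sqrt_series_square:
  "(mat 1 - sqrt_series B) ** (mat 1 - sqrt_series B) = mat 1 - B"
proof -
  have "(mat 1 - sqrt_series B) ** (mat 1 - sqrt_series B)
          = mat 1 - 2 *\<^sub>R sqrt_series B + sqrt_series B ** sqrt_series B"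
    by (simp add: matrix_diff_ldistrib matrix_diff_rdistrib scaleR_2 algebra_simps)
  then show ?thesis
    by (simp add: sqrt_series_square)
qed

end

section \<open>Square roots of positive semidefinite matrices\<close>

lemma quadratic_nonneg_discriminant:
  fixes a b c :: real
  assumes "\<And>s. 0 \<le> a + 2 * s * b + s\<^sup>2 * c" and "0 \<le> a" and "0 \<le> c"
  shows "b\<^sup>2 \<le> a * c"
proof (cases "c = 0")
  case True
  show ?thesis
  proof (rule ccontr)
    assume "\<not> ?thesis"
    then have "b \<noteq> 0" using True by simp
    then show False
      using assms(1)[of "- (a + 1) / (2 * b)"] True by (simp add: field_simps)
  qed
next
  case False
  then have "c > 0" using assms(3) by simp
  then show ?thesis
    using assms(1)[of "- b / c"] by (simp add: power2_eq_square field_simps)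
qed

lemma psd_cauchy_schwarz:
  assumes "psd_mat M"
  shows "(x \<bullet> (M *v y))\<^sup>2 \<le> (x \<bullet> (M *v x)) * (y \<bullet> (M *v y))"
proof (rule quadratic_nonneg_discriminant)
  have sym: "transpose M = M" and nonneg: "\<And>z. 0 \<le> z \<bullet> (M *v z)"
    using assms by (auto simp: psd_mat_def)
  show "0 \<le> x \<bullet> (M *v x)" "0 \<le> y \<bullet> (M *v y)" by (fact nonneg)+
  fix s
  have "y \<bullet> (M *v x) = x \<bullet> (M *v y)"
    by (metis inner_symmetric_matrix sym inner_commute)
  then have "(x + s *\<^sub>R y) \<bullet> (M *v (x + s *\<^sub>R y))
             = x \<bullet> (M *v x) + 2 * s * (x \<bullet> (M *v y)) + s\<^sup>2 * (y \<bullet> (M *v y))"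
    by (simp add: matrix_vector_right_distrib matrix_vector_mult_scaleR inner_add_left
        inner_add_right algebra_simps power2_eq_square)
  then show "0 \<le> x \<bullet> (M *v x) + 2 * s * (x \<bullet> (M *v y)) + s\<^sup>2 * (y \<bullet> (M *v y))"
    by (metis nonneg)
qed

lemma psd_quadratic_eq_0:
  assumes "psd_mat M" and "y \<bullet> (M *v y) = 0"
  shows "M *v y = 0"
  using psd_cauchy_schwarz[OF assms(1), of "M *v y" y] assms(2) by simp

lemma psd_contraction:
  assumes psd: "psd_mat B" and le: "\<And>x. x \<bullet> (B *v x) \<le> x \<bullet> x"
  shows "norm (B *v x) \<le> norm x"
proof -
  let ?y = "B *v x"
  have "(?y \<bullet> ?y)\<^sup>2 \<le> (x \<bullet> (B *v x)) * (?y \<bullet> (B *v ?y))"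
    using psd_cauchy_schwarz[OF psd, of x ?y] psd
    by (simp add: psd_mat_def inner_symmetric_matrix)
  also have "\<dots> \<le> (x \<bullet> x) * (?y \<bullet> ?y)"
    using psd by (intro mult_mono le) (auto simp: psd_mat_def)
  finally have "(?y \<bullet> ?y) * (?y \<bullet> ?y) \<le> (x \<bullet> x) * (?y \<bullet> ?y)"
    by (simp add: power2_eq_square)
  then have "?y \<bullet> ?y \<le> x \<bullet> x"
    by (cases "?y \<bullet> ?y = 0") (auto simp: order_le_less)
  then show ?thesis by (simp add: norm_le)
qed

lemma psd_sqrt_exists:
  assumes psd: "psd_mat A"
  obtains S where "psd_mat S" "S ** S = A" "\<And>C. C ** A = A ** C \<Longrightarrow> C ** S = S ** C"
proof -
  have symA: "transpose A = A" and nonnegA: "\<And>x. 0 \<le> x \<bullet> (A *v x)"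
    using psd by (auto simp: psd_mat_def)
  define t where "t = onorm ((*v) A) + 1"
  have t: "t > 0"
    using onorm_pos_le[OF matrix_vector_mul_bounded_linear[of A]] by (simp add: t_def)
  have A_le: "x \<bullet> (A *v x) \<le> t * (x \<bullet> x)" for x
  proof -
    have "x \<bullet> (A *v x) \<le> norm x * (onorm ((*v) A) * norm x)"
      using norm_cauchy_schwarz[of x "A *v x"] onorm[OF matrix_vector_mul_bounded_linear, of A x]
      by (meson mult_left_mono norm_ge_zero order_trans)
    also have "\<dots> \<le> t * (x \<bullet> x)"
      by (simp add: t_def dot_square_norm power2_eq_square algebra_simps)
    finally show ?thesis .
  qed
  \<comment> \<open>A = t (1 - B) with 0 \<le> B \<le> 1, so B is a contraction\<close>
  define B where "B = mat 1 - (1 / t) *\<^sub>R A"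
  have quadB: "x \<bullet> (B *v x) = x \<bullet> x - x \<bullet> (A *v x) / t" for x
    by (simp add: B_def matrix_vector_mult_diff_rdistrib inner_diff_right
        scaleR_matrix_vector_assoc[symmetric])
  have psdB: "psd_mat B"
    using A_le t unfolding psd_mat_def
    by (simp add: B_def transpose_diff symA transpose_scalar quadB[unfolded B_def]
        pos_divide_le_eq mult.commute)
  have contraction: "norm (B *v x) \<le> norm x" for x
    by (rule psd_contraction[OF psdB]) (simp add: quadB divide_nonneg_pos[OF nonnegA t])
  define S0 where "S0 = mat 1 - sqrt_series B"
  have symB: "transpose B = B" using psdB by (simp add: psd_mat_def)
  have psdS0: "psd_mat S0"
    unfolding S0_def by (rule psd_id_minus_sqrt_series[OF contraction symB])
  have S0_square: "S0 ** S0 = (1 / t) *\<^sub>R A"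
    by (simp add: S0_def id_minus_sqrt_series_square[OF contraction]) (simp add: B_def)
  show ?thesis
  proof
    show "psd_mat (sqrt t *\<^sub>R S0)"
      using psdS0 t by (auto simp: psd_mat_def transpose_scalar scaleR_matrix_vector_assoc[symmetric])
    show "(sqrt t *\<^sub>R S0) ** (sqrt t *\<^sub>R S0) = A"
      using t by (simp add: matrix_scalar_ac scalar_matrix_assoc[symmetric] S0_square)
    fix C
    assume "C ** A = A ** C"
    then have "C ** B = B ** C"
      by (simp add: B_def matrix_diff_ldistrib matrix_diff_rdistrib matrix_scalar_ac
          scalar_matrix_assoc[symmetric])
    then show "C ** (sqrt t *\<^sub>R S0) = (sqrt t *\<^sub>R S0) ** C"
      by (simp add: S0_def matrix_diff_ldistrib matrix_diff_rdistrib matrix_scalar_ac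
          scalar_matrix_assoc[symmetric] sqrt_series_commute[OF contraction] scaleR_diff_right)
  qed
qed

lemma psd_sqrt_eq_of_commute:
  assumes X: "psd_mat X" and Y: "psd_mat Y" and squares: "X ** X = Y ** Y"
    and commute: "X ** Y = Y ** X"
  shows "X = Y"
proof -
  define D where "D = X - Y"
  have symD: "transpose D = D"
    using X Y by (simp add: D_def transpose_diff psd_mat_def)
  have XYD: "(X + Y) ** D = 0"
    using squares commute by (simp add: D_def matrix_diff_ldistrib matrix_add_rdistrib)
  have "D *v x = 0" for x
  proof -
    let ?y = "D *v x"
    have "?y \<bullet> (X *v ?y) + ?y \<bullet> (Y *v ?y) = ?y \<bullet> ((X + Y) ** D *v x)"
      by (simp add: matrix_add_rdistrib matrix_vector_mult_add_rdistrib inner_add_right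
          matrix_vector_mul_assoc)
    then have sum0: "?y \<bullet> (X *v ?y) + ?y \<bullet> (Y *v ?y) = 0"
      by (simp add: XYD)
    have "0 \<le> ?y \<bullet> (X *v ?y)" "0 \<le> ?y \<bullet> (Y *v ?y)"
      using X Y by (auto simp: psd_mat_def)
    then have "X *v ?y = 0" "Y *v ?y = 0"
      using sum0 psd_quadratic_eq_0[OF X] psd_quadratic_eq_0[OF Y] by simp_all
    then have "D *v ?y = 0"
      by (simp add: D_def matrix_vector_mult_diff_rdistrib)
    then have "?y \<bullet> ?y = 0"
      by (metis inner_symmetric_matrix symD inner_zero_right)
    then show ?thesis by simp
  qed
  then have "D = 0"
    by (simp add: matrix_eq)
  then show ?thesis
    by (simp add: D_def)
qed

lemma psd_sqrt_unique:
  assumes "psd_mat A" and "psd_mat S" "S ** S = A" and "psd_mat T" "T ** T = A"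
  shows "S = T"
proof -
  obtain R where R: "psd_mat R" "R ** R = A" "\<And>C. C ** A = A ** C \<Longrightarrow> C ** R = R ** C"
    using psd_sqrt_exists[OF assms(1)] by blast
  have "X = R" if "psd_mat X" "X ** X = A" for X
  proof (rule psd_sqrt_eq_of_commute[OF that(1) R(1)])
    show "X ** X = R ** R" using that(2) R(2) by simp
    show "X ** R = R ** X"
      using that(2) by (intro R(3)) (metis matrix_mul_assoc)
  qed
  then show ?thesis using assms by metis
qed

context
  fixes A :: "real^'n^'n"
  assumes psd: "psd_mat A"
begin

lemma msqrt_is_psd_sqrt: "psd_mat (msqrt A) \<and> msqrt A ** msqrt A = A"
proof -
  obtain S where "psd_mat S" "S ** S = A"
    using psd_sqrt_exists[OF psd] by blast
  then have "\<exists>!S. psd_mat S \<and> S ** S = A"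
    using psd_sqrt_unique[OF psd] by blast
  then show ?thesis
    unfolding msqrt_def by (rule theI')
qed

lemma msqrt_square: "msqrt A ** msqrt A = A"
  using msqrt_is_psd_sqrt by blast

lemma transpose_msqrt: "transpose (msqrt A) = msqrt A"
  using msqrt_is_psd_sqrt by (simp add: psd_mat_def)

lemma wnorm_eq_norm_msqrt: "wnorm x A = norm (msqrt A *v x)"
proof -
  have "x \<bullet> (A *v x) = x \<bullet> (msqrt A *v (msqrt A *v x))"
    by (simp add: matrix_vector_mul_assoc msqrt_square)
  also have "\<dots> = (msqrt A *v x) \<bullet> (msqrt A *v x)"
    by (simp add: inner_symmetric_matrix transpose_msqrt)
  finally show ?thesis
    by (simp add: wnorm_def norm_eq_sqrt_inner)
qed

lemma wnorm_nonneg: "0 \<le> wnorm x A"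
  by (simp add: wnorm_eq_norm_msqrt)

end

lemma pos_def_imp_psd: "pos_def_mat A \<Longrightarrow> psd_mat A"
  unfolding pos_def_mat_def psd_mat_def
  by (metis inner_zero_left order_le_less matrix_vector_mult_0_right)

lemma pos_def_invertible:
  assumes "pos_def_mat (A :: real^'n^'n)"
  shows "invertible A"
proof -
  have "inj ((*v) A)"
  proof (rule injI)
    fix x y
    assume "A *v x = A *v y"
    then have "(x - y) \<bullet> (A *v (x - y)) = 0"
      by (simp add: matrix_vector_mult_diff_distrib)
    then show "x = y"
      using assms unfolding pos_def_mat_def by (metis eq_iff_diff_eq_0 less_irrefl)
  qed
  then show ?thesis
    using matrix_left_invertible_injective invertible_left_inverse by blast
qed

context
  fixes A :: "real^'n^'n"
  assumes pd: "pos_def_mat A"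
begin

lemma invertible_msqrt: "invertible (msqrt A)"
proof -
  have "msqrt A ** (msqrt A ** matrix_inv A) = mat 1"
    by (simp add: matrix_mul_assoc msqrt_square[OF pos_def_imp_psd[OF pd]]
        matrix_inv_inverse(1)[OF pos_def_invertible[OF pd]])
  then show ?thesis
    unfolding invertible_right_inverse by blast
qed

lemma msqrt_minvsqrt: "msqrt A ** minvsqrt A = mat 1"
  and minvsqrt_msqrt: "minvsqrt A ** msqrt A = mat 1"
  using matrix_inv_inverse[OF invertible_msqrt] by (simp_all add: minvsqrt_def)

lemma transpose_minvsqrt: "transpose (minvsqrt A) = minvsqrt A"
proof -
  have "transpose (minvsqrt A) ** msqrt A = mat 1"
    using arg_cong[OF msqrt_minvsqrt, of transpose]
    by (simp add: matrix_transpose_mul transpose_msqrt[OF pos_def_imp_psd[OF pd]])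
  then show ?thesis
    unfolding minvsqrt_def by (rule matrix_inv_unique[OF invertible_msqrt])
qed

lemma minvsqrt_square: "minvsqrt A ** minvsqrt A = matrix_inv A"
proof (rule matrix_inv_unique[OF pos_def_invertible[OF pd]])
  have "minvsqrt A ** minvsqrt A ** A = minvsqrt A ** minvsqrt A ** (msqrt A ** msqrt A)"
    by (simp add: msqrt_square[OF pos_def_imp_psd[OF pd]])
  also have "\<dots> = minvsqrt A ** (minvsqrt A ** msqrt A) ** msqrt A"
    by (simp add: matrix_mul_assoc)
  finally show "minvsqrt A ** minvsqrt A ** A = mat 1"
    by (simp add: minvsqrt_msqrt)
qed

lemma wnorm_inverse_eq_norm_minvsqrt: "wnorm x (matrix_inv A) = norm (minvsqrt A *v x)"
proof -
  have "x \<bullet> (matrix_inv A *v x) = x \<bullet> (minvsqrt A *v (minvsqrt A *v x))"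
    by (simp add: matrix_vector_mul_assoc minvsqrt_square)
  also have "\<dots> = (minvsqrt A *v x) \<bullet> (minvsqrt A *v x)"
    by (simp add: inner_symmetric_matrix transpose_minvsqrt)
  finally show ?thesis
    by (simp add: wnorm_def norm_eq_sqrt_inner)
qed

end

lemma minvsqrt_msqrt_vector: "pos_def_mat A \<Longrightarrow> minvsqrt A *v (msqrt A *v x) = x"
  by (simp add: matrix_vector_mul_assoc minvsqrt_msqrt)

lemma msqrt_vector_square: "psd_mat A \<Longrightarrow> msqrt A *v (msqrt A *v x) = A *v x"
  by (simp add: matrix_vector_mul_assoc msqrt_square)

lemma inner_le_wnorm_dual:
  assumes "pos_def_mat S"
  shows "x \<bullet> y \<le> wnorm x S * wnorm y (matrix_inv S)"
proof -
  have "x \<bullet> y = (msqrt S *v x) \<bullet> (minvsqrt S *v y)"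
    by (simp add: inner_symmetric_matrix transpose_msqrt pos_def_imp_psd[OF assms]
        matrix_vector_mul_assoc msqrt_minvsqrt[OF assms])
  also have "\<dots> \<le> norm (msqrt S *v x) * norm (minvsqrt S *v y)"
    by (rule norm_cauchy_schwarz)
  finally show ?thesis
    by (simp add: wnorm_eq_norm_msqrt pos_def_imp_psd[OF assms]
        wnorm_inverse_eq_norm_minvsqrt[OF assms])
qed

section \<open>Isometries and orthogonal projections\<close>

context
  fixes Q :: "real^'m^'n"
  assumes isometry: "transpose Q ** Q = mat 1"
begin

lemma transpose_isometry_cancel: "transpose Q *v (Q *v z) = z"
  by (simp only: matrix_vector_mul_assoc isometry matrix_vector_mul_lid)

lemma norm_isometry: "norm (Q *v z) = norm z"
  by (simp add: norm_eq_sqrt_inner inner_transpose_matrix[symmetric] transpose_isometry_cancel)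

lemma norm_transpose_isometry_le: "norm (transpose Q *v y) \<le> norm y"
proof -
  let ?z = "transpose Q *v y"
  have "?z \<bullet> ?z = y \<bullet> (Q *v ?z)"
    by (rule inner_transpose_matrix)
  also have "\<dots> \<le> norm y * norm ?z"
    using norm_cauchy_schwarz[of y "Q *v ?z"] by (simp add: norm_isometry)
  finally have "norm ?z * norm ?z \<le> norm y * norm ?z"
    by (simp add: dot_square_norm power2_eq_square)
  then show ?thesis
    by (cases "norm ?z = 0") auto
qed

lemma transpose_isometry_projection_complement: "transpose Q *v (y - Q *v (transpose Q *v y)) = 0"
  by (simp add: matrix_vector_mult_diff_distrib transpose_isometry_cancel)

lemma norm_projection_complement_le: "norm (y - Q *v (transpose Q *v y)) \<le> norm y"
proof -
  let ?p = "y - Q *v (transpose Q *v y)" and ?z = "transpose Q *v y"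
  have "y \<bullet> y = ?p \<bullet> ?p + ?z \<bullet> ?z"
  proof -
    have "?p \<bullet> (Q *v ?z) = 0"
      by (simp add: inner_transpose_matrix[symmetric] inner_commute[of ?p]
          transpose_isometry_projection_complement)
    moreover have "(Q *v ?z) \<bullet> (Q *v ?z) = ?z \<bullet> ?z"
      by (simp add: norm_isometry dot_square_norm)
    ultimately show ?thesis
      by (simp add: inner_diff_left inner_diff_right inner_commute)
  qed
  then show ?thesis
    by (simp add: norm_le)
qed

end

lemma projection_complement_apply:
  "(mat 1 - Q ** transpose Q) *v y = y - Q *v (transpose Q *v (y :: real^'n))"
  by (simp add: matrix_vector_mult_diff_rdistrib matrix_vector_mul_assoc[symmetric])

lemma opnorm2_projection_le:
  fixes Q :: "real^'m^'n" and A :: "real^'k^'n"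
  assumes isometry: "transpose Q ** Q = mat 1"
  shows "opnorm2 ((mat 1 - Q ** transpose Q) ** A) \<le> opnorm2 A"
proof (rule opnorm2_le)
  fix x
  have "norm ((mat 1 - Q ** transpose Q) ** A *v x) = norm ((mat 1 - Q ** transpose Q) *v (A *v x))"
    by (simp only: matrix_vector_mul_assoc)
  also have "\<dots> \<le> norm (A *v x)"
    unfolding projection_complement_apply by (rule norm_projection_complement_le[OF isometry])
  also have "\<dots> \<le> opnorm2 A * norm x"
    by (rule opnorm2_bound)
  finally show "norm ((mat 1 - Q ** transpose Q) ** A *v x) \<le> opnorm2 A * norm x" .
qed

lemma norm_split_projection_le:
  fixes Q :: "real^'m^'n" and Hi Si :: "real^'n^'n"
  assumes isometry: "transpose Q ** Q = mat 1"
    and sym: "transpose Hi = Hi" "transpose Si = Si"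
  shows "norm (Si *v (Hi *v u))
           \<le> opnorm2 ((mat 1 - Q ** transpose Q) ** Hi ** Si) * norm (u - Q *v (transpose Q *v u))
             + opnorm2 (Hi ** Si) * norm (transpose Q *v u)"
proof -
  let ?P = "mat 1 - Q ** transpose Q" and ?p = "u - Q *v (transpose Q *v u)"
    and ?q = "Q *v (transpose Q *v u)"
  have symP: "transpose ?P = ?P"
    by (simp add: transpose_diff matrix_transpose_mul)
  have "?P *v ?p = ?p"
    by (simp only: projection_complement_apply transpose_isometry_projection_complement[OF isometry]
        matrix_vector_mult_0_right diff_zero)
  moreover have "Si *v (Hi *v (?P *v y)) = transpose (?P ** Hi ** Si) *v y" for y
    by (simp only: matrix_transpose_mul symP sym matrix_vector_mul_assoc matrix_mul_assoc)
  ultimately have "Si *v (Hi *v ?p) = transpose (?P ** Hi ** Si) *v ?p"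
    by metis
  then have first: "norm (Si *v (Hi *v ?p)) \<le> opnorm2 (?P ** Hi ** Si) * norm ?p"
    by (simp only: opnorm2_transpose_bound)
  have HS: "Si *v (Hi *v y) = transpose (Hi ** Si) *v y" for y
    by (simp only: matrix_transpose_mul sym matrix_vector_mul_assoc)
  have second: "norm (Si *v (Hi *v ?q)) \<le> opnorm2 (Hi ** Si) * norm (transpose Q *v u)"
    using opnorm2_transpose_bound[of "Hi ** Si" ?q] norm_isometry[OF isometry]
    by (simp only: HS)
  have "Si *v (Hi *v u) = Si *v (Hi *v ?p) + Si *v (Hi *v ?q)"
    by (simp add: matrix_vector_mult_diff_distrib)
  then have "norm (Si *v (Hi *v u)) \<le> norm (Si *v (Hi *v ?p)) + norm (Si *v (Hi *v ?q))"
    by (metis norm_triangle_ineq)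
  then show ?thesis
    using first second by linarith
qed

text \<open>
  The matrix \<open>Q = H^(-1/2) J^T W^(-1/2)\<close>, with \<open>W = J H^(-1) J^T\<close>, is an isometric embedding
  whose range is the column space of \<open>H^(-1/2) J^T\<close>; hence \<open>P_G = Q Q^T\<close>.
\<close>
definition gram_isometry :: "real^'d^'d \<Rightarrow> real^'d^'m \<Rightarrow> real^'m^'d" where
  "gram_isometry H J = minvsqrt H ** transpose J ** minvsqrt (J ** matrix_inv H ** transpose J)"

context
  fixes H :: "real^'d^'d" and J :: "real^'d^'m"
  assumes H_pd: "pos_def_mat H" and W_invertible: "invertible (J ** matrix_inv H ** transpose J)"
begin

lemma gram_pos_def: "pos_def_mat (J ** matrix_inv H ** transpose J)"
  unfolding pos_def_mat_def
proof (intro conjI allI impI)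
  let ?W = "J ** matrix_inv H ** transpose J" and ?Hi = "minvsqrt H"
  have W_eq: "?W = J ** ?Hi ** transpose (J ** ?Hi)"
    by (simp add: minvsqrt_square[OF H_pd, symmetric] matrix_transpose_mul transpose_minvsqrt[OF H_pd]
        matrix_mul_assoc)
  then show "transpose ?W = ?W"
    by (simp add: matrix_transpose_mul matrix_mul_assoc)
  fix x :: "real^'m"
  assume "x \<noteq> 0"
  then have "?W *v x \<noteq> 0"
    using W_invertible by (metis invertible_def matrix_vector_mul_assoc matrix_vector_mul_lid
        matrix_vector_mult_0_right)
  then have nonzero: "transpose (J ** ?Hi) *v x \<noteq> 0"
    by (metis W_eq matrix_vector_mul_assoc matrix_vector_mult_0_right)
  have "x \<bullet> (?W *v x) = x \<bullet> ((J ** ?Hi) *v (transpose (J ** ?Hi) *v x))"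
    by (simp only: W_eq matrix_vector_mul_assoc)
  also have "\<dots> = (transpose (J ** ?Hi) *v x) \<bullet> (transpose (J ** ?Hi) *v x)"
    by (rule inner_transpose_matrix[symmetric])
  finally show "0 < x \<bullet> (?W *v x)"
    using nonzero by simp
qed

lemma gram_isometry_orthonormal: "transpose (gram_isometry H J) ** gram_isometry H J = mat 1"
proof -
  let ?W = "J ** matrix_inv H ** transpose J"
  note W_pd = gram_pos_def
  have "transpose (gram_isometry H J) ** gram_isometry H J
          = minvsqrt ?W ** (J ** (minvsqrt H ** minvsqrt H) ** transpose J) ** minvsqrt ?W"
    by (simp add: gram_isometry_def matrix_transpose_mul transpose_minvsqrt[OF H_pd]
        transpose_minvsqrt[OF W_pd] matrix_mul_assoc)
  also have "\<dots> = minvsqrt ?W ** (msqrt ?W ** msqrt ?W) ** minvsqrt ?W"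
    by (simp only: minvsqrt_square[OF H_pd] msqrt_square[OF pos_def_imp_psd[OF W_pd]])
  also have "\<dots> = (minvsqrt ?W ** msqrt ?W) ** (msqrt ?W ** minvsqrt ?W)"
    by (simp only: matrix_mul_assoc)
  finally show ?thesis
    by (simp add: minvsqrt_msqrt[OF W_pd] msqrt_minvsqrt[OF W_pd])
qed

lemma gram_projection:
  "gram_isometry H J ** transpose (gram_isometry H J)
     = minvsqrt H ** transpose J ** matrix_inv (J ** matrix_inv H ** transpose J) ** J ** minvsqrt H"
  by (simp add: gram_isometry_def matrix_transpose_mul transpose_minvsqrt[OF H_pd]
      transpose_minvsqrt[OF gram_pos_def] minvsqrt_square[OF gram_pos_def, symmetric]
      matrix_mul_assoc)

end

section \<open>The perturbation estimate\<close>

lemma increment_ge_of_derivative_ge: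
  fixes f f' :: "real \<Rightarrow> real"
  assumes "\<And>t. (f has_real_derivative f' t) (at t)" and "\<And>t. 0 \<le> t \<Longrightarrow> t \<le> 1 \<Longrightarrow> - (K * t) \<le> f' t"
  shows "f 0 - K / 2 \<le> f 1"
proof -
  have "(\<lambda>t. f t + K * t\<^sup>2 / 2) 0 \<le> (\<lambda>t. f t + K * t\<^sup>2 / 2) 1"
  proof (rule DERIV_nonneg_imp_nondecreasing[of 0 1])
    fix t :: real
    assume t: "0 \<le> t" "t \<le> 1"
    have "((\<lambda>t. f t + K * t\<^sup>2 / 2) has_real_derivative f' t + K * t) (at t)"
      using assms(1)[of t] by (auto intro!: derivative_eq_intros)
    moreover have "0 \<le> f' t + K * t"
      using assms(2)[OF t] by linarith
    ultimately show "\<exists>y. ((\<lambda>t. f t + K * t\<^sup>2 / 2) has_real_derivative y) (at t) \<and> 0 \<le> y"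
      by blast
  qed simp
  then show ?thesis by simp
qed

lemma level_step_derivative_bound:
  fixes g :: "real^'d \<Rightarrow> real^'m" and Jg :: "real^'d \<Rightarrow> real^'d^'m" and M :: "real^'m^'m"
  assumes deriv: "\<And>x. (g has_derivative (\<lambda>h. Jg x *v h)) (at x)"
    and bound: "\<And>t. 0 \<le> t \<Longrightarrow> t \<le> 1 \<Longrightarrow> norm (M *v ((Jg (p + t *\<^sub>R d) - Jg p) *v d)) \<le> c * t"
    and level: "g (p + d) = g p"
  shows "norm (M *v (Jg p *v d)) \<le> c / 2"
proof -
  have c: "0 \<le> c"
    using bound[of 1] norm_ge_zero[of "M *v ((Jg (p + 1 *\<^sub>R d) - Jg p) *v d)"] by linarith
  define v where "v = M *v (Jg p *v d)"
  \<comment> \<open>the level condition makes \<open>f 1 - f 0 = - |v|\<^sup>2\<close>, while \<open>f' t \<ge> - |v| c t\<close>\<close>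
  define f where "f t = v \<bullet> (M *v (g (p + t *\<^sub>R d) - t *\<^sub>R (Jg p *v d)))" for t
  define f' where "f' t = v \<bullet> (M *v ((Jg (p + t *\<^sub>R d) - Jg p) *v d))" for t
  have "f 0 - norm v * c / 2 \<le> f 1"
  proof (rule increment_ge_of_derivative_ge)
    fix t :: real
    have segment: "((\<lambda>t. g (p + t *\<^sub>R d)) has_derivative (\<lambda>s. Jg (p + t *\<^sub>R d) *v (s *\<^sub>R d))) (at t)"
      by (rule has_derivative_compose[OF _ deriv]) (auto intro!: derivative_eq_intros)
    have "((\<lambda>t. M *v (g (p + t *\<^sub>R d) - t *\<^sub>R (Jg p *v d))) has_derivative
            (\<lambda>s. M *v (Jg (p + t *\<^sub>R d) *v (s *\<^sub>R d) - s *\<^sub>R (Jg p *v d)))) (at t)"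
      by (rule bounded_linear.has_derivative[OF matrix_vector_mul_bounded_linear])
         (auto intro!: derivative_eq_intros segment)
    from bounded_linear.has_derivative[OF bounded_linear_inner_right this, of v]
    show "(f has_real_derivative f' t) (at t)"
      unfolding f_def f'_def
      by (rule has_derivative_imp_has_field_derivative)
         (simp add: matrix_vector_mult_scaleR matrix_vector_mult_diff_rdistrib
           matrix_vector_mult_diff_distrib inner_diff_right algebra_simps)
    assume t: "0 \<le> t" "t \<le> 1"
    have "\<bar>f' t\<bar> \<le> norm v * (c * t)"
      unfolding f'_def using Cauchy_Schwarz_ineq2[of v] bound[OF t]
      by (meson mult_left_mono norm_ge_zero order_trans)
    then show "- (norm v * c * t) \<le> f' t"
      by (simp add: abs_le_iff mult.assoc)
  qed
  then have "norm v * norm v \<le> norm v * (c / 2)"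
    by (simp add: f_def level v_def matrix_vector_mult_diff_distrib inner_diff_right
        dot_square_norm power2_eq_square)
  then show ?thesis
    unfolding v_def[symmetric] by (cases "norm v = 0") (auto simp: c)
qed

lemma norm_diff3_le: "norm (a - b - c - d) \<le> norm a + norm b + norm c + norm (d :: 'a :: real_normed_vector)"
  by (smt (verit) norm_triangle_ineq4)

lemma tangent_bound_arith:
  fixes L U Z p q a :: real
  assumes L: "0 < L" and U: "0 \<le> U" and Z: "0 \<le> Z" and small: "L * U \<le> 1/3"
    and p: "p \<le> L * U\<^sup>2 / 2" and hZ: "Z \<le> 1 / (12 * L) + L * U * Z + L * U\<^sup>2 / 2 + U / 4"
    and q: "q \<le> a + L * U * Z + U / 4" and hU: "U \<le> q + p"
  shows "q + U / 6 \<le> 4 * a"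
proof -
  have LU2: "L * U\<^sup>2 / 2 \<le> U / 6"
    using mult_right_mono[OF small U] by (simp add: power2_eq_square mult.assoc)
  have "L * U * Z \<le> Z / 3"
    using mult_right_mono[OF small Z] by simp
  then have "Z \<le> 3 / 2 * (1 / (12 * L)) + 5 * U / 8"
    using hZ LU2 by linarith
  then have "L * U * Z \<le> L * U * (3 / 2 * (1 / (12 * L)) + 5 * U / 8)"
    using L U by (simp add: mult_left_mono)
  also have "\<dots> = U / 8 + 5 / 8 * ((L * U) * U)"
    using L by (simp add: field_simps)
  also have "\<dots> \<le> U / 8 + 5 / 8 * (1 / 3 * U)"
    using mult_right_mono[OF small U] by simp
  finally show ?thesis
    using LU2 q hU p by linarith
qed

lemma tangent_component_bound:
  fixes Q :: "real^'m^'n" and z :: "real^'m" and v k u e :: "real^'n"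
  assumes isometry: "transpose Q ** Q = mat 1"
    and decomposition: "v = Q *v z + k + u + e"
    and k: "norm k \<le> L * norm u * norm z" and e: "norm e \<le> norm u / 4"
    and normal_u: "norm (transpose Q *v u) \<le> L * (norm u)\<^sup>2 / 2"
    and normal_v: "norm (transpose Q *v v) \<le> 1 / (12 * L)"
    and L: "0 < L" and small: "L * norm u \<le> 1/3"
  shows "norm (u - Q *v (transpose Q *v u)) + norm u / 6
           \<le> 4 * norm (v - Q *v (transpose Q *v v))"
proof -
  let ?Qt = "\<lambda>y. transpose Q *v y" and ?P = "\<lambda>y. y - Q *v (transpose Q *v y)"
  note Qt_le = norm_transpose_isometry_le[OF isometry]
  have "z = ?Qt v - ?Qt k - ?Qt u - ?Qt e"
    by (simp add: decomposition matrix_vector_right_distrib transpose_isometry_cancel[OF isometry])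
  then have "norm z \<le> norm (?Qt v) + norm (?Qt k) + norm (?Qt u) + norm (?Qt e)"
    by (metis norm_diff3_le)
  then have hZ: "norm z \<le> 1 / (12 * L) + L * norm u * norm z + L * (norm u)\<^sup>2 / 2 + norm u / 4"
    using Qt_le[of k] Qt_le[of e] k e normal_u normal_v by linarith
  have "?P u = ?P v - ?P k - ?P e"
    by (simp add: decomposition matrix_vector_right_distrib transpose_isometry_cancel[OF isometry]
        algebra_simps)
  then have "norm (?P u) \<le> norm (?P v) + norm (?P k) + norm (?P e)"
    by (metis norm_diff3_le diff_zero norm_zero add_0_right)
  then have hPu: "norm (?P u) \<le> norm (?P v) + L * norm u * norm z + norm u / 4"
    using norm_projection_complement_le[OF isometry, of k]
      norm_projection_complement_le[OF isometry, of e] k e by linarith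
  have "norm u \<le> norm (?P u) + norm (Q *v ?Qt u)"
    by (metis diff_add_cancel norm_triangle_ineq)
  then have hU: "norm u \<le> norm (?P u) + norm (?Qt u)"
    by (simp add: norm_isometry[OF isometry])
  show ?thesis
    by (rule tangent_bound_arith[OF L norm_ge_zero norm_ge_zero small normal_u hZ hPu hU])
qed

lemma small_step_arith:
  fixes L U An Bn :: real
  assumes "0 < L" "0 \<le> U" "0 \<le> Bn" "Bn \<le> An" and small: "U \<le> Bn / (3 * L * An)"
  shows "L * U \<le> 1/3" and "An * (L * U) \<le> Bn / 3"
proof -
  have "L * U \<le> 1/3 \<and> An * (L * U) \<le> Bn / 3"
  proof (cases "An = 0")
    case True
    \<comment> \<open>then \<open>small\<close> reads \<open>U \<le> 0\<close>, since division by zero yields zero\<close>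
    then show ?thesis using assms by simp
  next
    case False
    then have An: "0 < An" using assms by simp
    have LU: "L * U \<le> Bn / (3 * An)"
      using mult_left_mono[OF small, of L] assms by (simp add: field_simps)
    also have "\<dots> \<le> 1/3"
      using assms An by (simp add: field_simps)
    finally show ?thesis
      using mult_left_mono[OF LU, of An] An by simp
  qed
  then show "L * U \<le> 1/3" and "An * (L * U) \<le> Bn / 3" by auto
qed

lemma inner_le_of_wnorm_bound:
  assumes "pos_def_mat S" and "wstar \<bullet> y \<le> 0"
    and "wnorm y (matrix_inv S) \<le> C * wnorm (w - wstar) S"
  shows "w \<bullet> y \<le> C * (wnorm (w - wstar) S)\<^sup>2"
proof -
  have "w \<bullet> y \<le> (w - wstar) \<bullet> y"
    using assms(2) by (simp add: inner_diff_left)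
  also have "\<dots> \<le> wnorm (w - wstar) S * wnorm y (matrix_inv S)"
    by (rule inner_le_wnorm_dual[OF assms(1)])
  also have "\<dots> \<le> wnorm (w - wstar) S * (C * wnorm (w - wstar) S)"
    by (rule mult_left_mono[OF assms(3) wnorm_nonneg[OF pos_def_imp_psd[OF assms(1)]]])
  finally show ?thesis
    by (simp add: power2_eq_square mult_ac)
qed

lemma eq_0_of_transpose_mult_eq_0:
  assumes "invertible (J ** M ** transpose J)" and "transpose J *v x = 0"
  shows "x = (0 :: real^'m)"
proof -
  have "(J ** M ** transpose J) *v x = 0"
    using assms(2) by (simp add: matrix_vector_mul_assoc[symmetric])
  then show ?thesis
    using assms(1) by (metis invertible_def matrix_vector_mul_assoc matrix_vector_mul_lid
        matrix_vector_mult_0_right)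
qed

locale kkt_perturbation =
  fixes g :: "real^'d \<Rightarrow> real^'m" and Jg :: "real^'d \<Rightarrow> real^'d^'m"
    and H :: "real^'d^'d" and phistar phi :: "real^'d" and lamstar lam :: "real^'m"
    and L :: real
  assumes g_deriv: "\<And>x. (g has_derivative (\<lambda>h. Jg x *v h)) (at x)"
    and same_level: "g phi = g phistar"
    and H_pd: "pos_def_mat H"
    and W_invertible: "invertible (Jg phistar ** matrix_inv H ** transpose (Jg phistar))"
    and S1: "wnorm (transpose (Jg phi - Jg phistar) *v lamstar - H *v (phi - phistar)) (matrix_inv H)
               \<le> 1/4 * wnorm (phi - phistar) H"
    and S2: "\<And>x. opnorm2 (minvsqrt (Jg phistar ** matrix_inv H ** transpose (Jg phistar))
                           ** (Jg x - Jg phistar) ** minvsqrt H)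
                 \<le> L * wnorm (x - phistar) H"
    and L_pos: "0 < L"
begin

abbreviation "W \<equiv> Jg phistar ** matrix_inv H ** transpose (Jg phistar)"
abbreviation "Q \<equiv> gram_isometry H (Jg phistar)"
abbreviation "step \<equiv> msqrt H *v (phi - phistar)"
abbreviation "gap \<equiv> minvsqrt H *v (transpose (Jg phi) *v lam - transpose (Jg phistar) *v lamstar)"

lemmas W_pd = gram_pos_def[OF H_pd W_invertible]
lemmas Q_isometry = gram_isometry_orthonormal[OF H_pd W_invertible]

lemma transpose_Q: "transpose Q = minvsqrt W ** Jg phistar ** minvsqrt H"
  by (simp add: gram_isometry_def matrix_transpose_mul transpose_minvsqrt[OF H_pd]
      transpose_minvsqrt[OF W_pd] matrix_mul_assoc)

lemma norm_step: "norm step = wnorm (phi - phistar) H"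
  by (simp add: wnorm_eq_norm_msqrt pos_def_imp_psd[OF H_pd])

lemma normal_step: "norm (transpose Q *v step) \<le> L * (norm step)\<^sup>2 / 2"
proof -
  let ?d = "phi - phistar" and ?Wi = "minvsqrt W"
  have "transpose Q *v step = ?Wi *v (Jg phistar *v ?d)"
    by (simp add: transpose_Q matrix_vector_mul_assoc[symmetric] minvsqrt_msqrt_vector[OF H_pd])
  also have "norm \<dots> \<le> L * (norm step)\<^sup>2 / 2"
  proof (rule level_step_derivative_bound[OF g_deriv])
    fix t :: real
    assume t: "0 \<le> t" "t \<le> 1"
    let ?K = "?Wi ** (Jg (phistar + t *\<^sub>R ?d) - Jg phistar) ** minvsqrt H"
    have "?Wi *v ((Jg (phistar + t *\<^sub>R ?d) - Jg phistar) *v ?d) = ?K *v step"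
      by (simp add: matrix_vector_mul_assoc[symmetric] minvsqrt_msqrt_vector[OF H_pd])
    also have "norm \<dots> \<le> opnorm2 ?K * norm step"
      by (rule opnorm2_bound)
    also have "\<dots> \<le> L * wnorm (t *\<^sub>R ?d) H * norm step"
      using S2[of "phistar + t *\<^sub>R ?d"] by (simp add: mult_right_mono)
    also have "wnorm (t *\<^sub>R ?d) H = t * norm step"
      using t by (simp add: wnorm_eq_norm_msqrt pos_def_imp_psd[OF H_pd] matrix_vector_mult_scaleR)
    finally show "norm (?Wi *v ((Jg (phistar + t *\<^sub>R ?d) - Jg phistar) *v ?d))
                    \<le> L * (norm step)\<^sup>2 * t"
      by (simp add: power2_eq_square algebra_simps)
  qed (simp add: same_level)
  finally show ?thesis .
qed

lemma gap_decomposition: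
  obtains z k e where "gap = Q *v z + k + step + e"
    and "norm k \<le> L * norm step * norm z" and "norm e \<le> norm step / 4"
proof
  let ?J = "Jg phi" and ?Js = "Jg phistar" and ?d = "phi - phistar" and ?mu = "lam - lamstar"
    and ?Hi = "minvsqrt H" and ?Wi = "minvsqrt W"
  let ?K = "?Wi ** (?J - ?Js) ** ?Hi" and ?z = "msqrt W *v ?mu"
  have "transpose ?J *v lam - transpose ?Js *v lamstar
          = transpose ?Js *v ?mu + transpose (?J - ?Js) *v ?mu
            + (transpose (?J - ?Js) *v lamstar - H *v ?d) + H *v ?d"
    by (simp add: transpose_diff matrix_vector_mult_diff_distrib matrix_vector_mult_diff_rdistrib)
  moreover have "?Hi *v (transpose ?Js *v ?mu) = Q *v ?z"
    by (simp add: gram_isometry_def matrix_vector_mul_assoc[symmetric] minvsqrt_msqrt_vector[OF W_pd])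
  moreover have "?Hi *v (H *v ?d) = step"
    by (simp add: msqrt_vector_square[OF pos_def_imp_psd[OF H_pd], symmetric]
        minvsqrt_msqrt_vector[OF H_pd])
  ultimately show "gap = Q *v ?z + ?Hi *v (transpose (?J - ?Js) *v ?mu) + step
                     + ?Hi *v (transpose (?J - ?Js) *v lamstar - H *v ?d)"
    by (simp add: matrix_vector_right_distrib matrix_vector_mult_diff_distrib)
  have "?Hi *v (transpose (?J - ?Js) *v ?mu) = transpose ?K *v ?z"
    by (simp add: matrix_transpose_mul transpose_minvsqrt[OF H_pd] transpose_minvsqrt[OF W_pd]
        matrix_vector_mul_assoc[symmetric] minvsqrt_msqrt_vector[OF W_pd])
  also have "norm \<dots> \<le> opnorm2 ?K * norm ?z"
    by (rule opnorm2_transpose_bound)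
  also have "\<dots> \<le> L * norm step * norm ?z"
    using S2[of phi] by (simp add: norm_step mult_right_mono)
  finally show "norm (?Hi *v (transpose (?J - ?Js) *v ?mu)) \<le> L * norm step * norm ?z" .
  show "norm (?Hi *v (transpose (?J - ?Js) *v lamstar - H *v ?d)) \<le> norm step / 4"
    using S1 by (simp add: wnorm_inverse_eq_norm_minvsqrt[OF H_pd] norm_step)
qed

lemma tangent_estimate:
  assumes "norm (transpose Q *v gap) \<le> 1 / (12 * L)" and "L * norm step \<le> 1/3"
  shows "norm (step - Q *v (transpose Q *v step)) + norm step / 6
           \<le> 4 * norm (gap - Q *v (transpose Q *v gap))"
proof -
  obtain z k e where "gap = Q *v z + k + step + e"
    and "norm k \<le> L * norm step * norm z" and "norm e \<le> norm step / 4"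
    by (rule gap_decomposition)
  then show ?thesis
    using tangent_component_bound[OF Q_isometry _ _ _ normal_step assms(1) L_pos assms(2)] by blast
qed

lemma sigma_estimate:
  fixes Sigma :: "real^'d^'d"
  defines "Bn \<equiv> opnorm2 ((mat 1 - Q ** transpose Q) ** minvsqrt H ** minvsqrt Sigma)"
  assumes Sigma_pd: "pos_def_mat Sigma"
    and small: "wnorm (phi - phistar) H \<le> Bn / (3 * L * opnorm2 (minvsqrt H ** minvsqrt Sigma))"
    and normal_gap: "norm (Q ** transpose Q *v gap) \<le> 1 / (12 * L)"
  shows "wnorm (phi - phistar) (matrix_inv Sigma)
           \<le> 4 * Bn\<^sup>2 * wnorm (transpose (Jg phi) *v lam - transpose (Jg phistar) *v lamstar) Sigma"
proof -
  let ?Hi = "minvsqrt H" and ?Si = "minvsqrt Sigma" and ?U = "norm step"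
    and ?P = "\<lambda>y. y - Q *v (transpose Q *v y)"
    and ?wd = "transpose (Jg phi) *v lam - transpose (Jg phistar) *v lamstar"
  define An where "An = opnorm2 (?Hi ** ?Si)"
  have Bn: "0 \<le> Bn" "Bn \<le> An"
    using opnorm2_projection_le[OF Q_isometry, of "?Hi ** ?Si"]
    by (simp_all add: Bn_def An_def opnorm2_nonneg matrix_mul_assoc)
  have "norm step \<le> Bn / (3 * L * An)"
    using small by (simp add: norm_step An_def)
  note small_step = small_step_arith[OF L_pos norm_ge_zero Bn this]
  have "norm (transpose Q *v gap) \<le> 1 / (12 * L)"
    using normal_gap by (simp add: matrix_vector_mul_assoc[symmetric] norm_isometry[OF Q_isometry])
  note tangent = tangent_estimate[OF this small_step(1)]
  have "wnorm (phi - phistar) (matrix_inv Sigma) = norm (?Si *v (?Hi *v step))"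
    by (simp add: wnorm_inverse_eq_norm_minvsqrt[OF Sigma_pd] minvsqrt_msqrt_vector[OF H_pd])
  also have "\<dots> \<le> Bn * norm (?P step) + An * norm (transpose Q *v step)"
    unfolding Bn_def An_def
    by (rule norm_split_projection_le[OF Q_isometry transpose_minvsqrt[OF H_pd] transpose_minvsqrt[OF Sigma_pd]])
  also have "An * norm (transpose Q *v step) \<le> An * (L * ?U\<^sup>2 / 2)"
    using normal_step Bn by (intro mult_left_mono) simp_all
  also have "\<dots> \<le> Bn * (?U / 6)"
    using mult_right_mono[OF small_step(2), of "?U / 2"] by (simp add: power2_eq_square mult_ac)
  also have "Bn * norm (?P step) + Bn * (?U / 6) \<le> Bn * (4 * norm (?P gap))"
    using mult_left_mono[OF tangent Bn(1)] by (simp add: distrib_left)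
  also have "norm (?P gap) \<le> Bn * wnorm ?wd Sigma"
  proof -
    have "?P gap = (mat 1 - Q ** transpose Q) ** ?Hi ** ?Si *v (msqrt Sigma *v ?wd)"
      by (simp add: projection_complement_apply[symmetric] matrix_vector_mul_assoc[symmetric]
          minvsqrt_msqrt_vector[OF Sigma_pd])
    then show ?thesis
      by (simp add: Bn_def opnorm2_bound wnorm_eq_norm_msqrt pos_def_imp_psd[OF Sigma_pd])
  qed
  finally show ?thesis
    using Bn by (simp add: power2_eq_square mult_left_mono)
qed

end

theorem proposition2:
  fixes g :: "real^'d \<Rightarrow> real^'m"
    and Jg :: "real^'d \<Rightarrow> real^'d^'m"
    and Hg :: "'m \<Rightarrow> real^'d \<Rightarrow> real^'d^'d"
    and wstar w phistar phi :: "real^'d"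
    and lamstar lam :: "real^'m"
    and Sigma :: "real^'d^'d"
    and L :: real
  assumes m_le_d: "CARD('m) \<le> CARD('d)"
    and g_deriv: "\<And>x. (g has_derivative (\<lambda>h. Jg x *v h)) (at x)"
    and g_deriv2: "\<And>i x. ((\<lambda>y. Jg y $ i) has_derivative (\<lambda>h. Hg i x *v h)) (at x)"
    and g_strongly_convex: "\<And>i. \<exists>\<mu>>0. convex_on UNIV (\<lambda>x. g x $ i - \<mu> / 2 * (norm x)\<^sup>2)"
    and phistar_feas: "\<forall>i. g phistar $ i \<le> 0"
    and phistar_max: "\<And>x. (\<forall>i. g x $ i \<le> 0) \<Longrightarrow> x \<bullet> wstar \<le> phistar \<bullet> wstar"
    and phi_feas: "\<forall>i. g phi $ i \<le> 0"
    and phi_max: "\<And>x. (\<forall>i. g x $ i \<le> 0) \<Longrightarrow> x \<bullet> w \<le> phi \<bullet> w"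
    and active_star: "g phistar = 0"
    and active: "g phi = 0"
    and lamstar_nonneg: "\<forall>i. lamstar $ i \<ge> 0"
    and lam_nonneg: "\<forall>i. lam $ i \<ge> 0"
    and kkt_star: "wstar = transpose (Jg phistar) *v lamstar"
    and kkt: "w = transpose (Jg phi) *v lam"
    and H_pd: "pos_def_mat (\<Sum>i\<in>UNIV. lamstar $ i *\<^sub>R Hg i phistar)"
    and W_inv: "invertible (Jg phistar ** matrix_inv (\<Sum>i\<in>UNIV. lamstar $ i *\<^sub>R Hg i phistar)
                              ** transpose (Jg phistar))"
    and S1: "let H = (\<Sum>i\<in>UNIV. lamstar $ i *\<^sub>R Hg i phistar) in
             wnorm (transpose (Jg phi - Jg phistar) *v lamstar - H *v (phi - phistar)) (matrix_inv H)
               \<le> 1/4 * wnorm (phi - phistar) H"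
    and L_pos: "L > 0"
    and S2: "let H = (\<Sum>i\<in>UNIV. lamstar $ i *\<^sub>R Hg i phistar);
                 W = Jg phistar ** matrix_inv H ** transpose (Jg phistar) in
             \<forall>x. opnorm2 (minvsqrt W ** (Jg x - Jg phistar) ** minvsqrt H) \<le> L * wnorm (x - phistar) H"
    and Sigma_pd: "pos_def_mat Sigma"
    and hyp1: "let H = (\<Sum>i\<in>UNIV. lamstar $ i *\<^sub>R Hg i phistar);
                   W = Jg phistar ** matrix_inv H ** transpose (Jg phistar);
                   PG = minvsqrt H ** transpose (Jg phistar) ** matrix_inv W ** Jg phistar ** minvsqrt H in
               wnorm (phi - phistar) H
                 \<le> opnorm2 ((mat 1 - PG) ** minvsqrt H ** minvsqrt Sigma)
                   / (3 * L * opnorm2 (minvsqrt H ** minvsqrt Sigma))"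
    and hyp2: "let H = (\<Sum>i\<in>UNIV. lamstar $ i *\<^sub>R Hg i phistar);
                   W = Jg phistar ** matrix_inv H ** transpose (Jg phistar);
                   PG = minvsqrt H ** transpose (Jg phistar) ** matrix_inv W ** Jg phistar ** minvsqrt H in
               norm (PG *v (minvsqrt H *v (w - wstar))) \<le> 1 / (12 * L)"
  shows "let H = (\<Sum>i\<in>UNIV. lamstar $ i *\<^sub>R Hg i phistar);
             W = Jg phistar ** matrix_inv H ** transpose (Jg phistar);
             PG = minvsqrt H ** transpose (Jg phistar) ** matrix_inv W ** Jg phistar ** minvsqrt H;
             d = real CARD('d);
             c = 5 / sqrt d * wnorm wstar Sigma
                   * (opnorm2 ((mat 1 - PG) ** minvsqrt H ** minvsqrt Sigma))\<^sup>2;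
             r = wnorm (w - wstar) Sigma / wnorm wstar Sigma in
         wnorm (phi - phistar) (matrix_inv Sigma) \<le> c * sqrt d * r
         \<and> w \<bullet> (phi - phistar) \<le> c * sqrt d * wnorm wstar Sigma * r\<^sup>2"
proof -
  define H where "H = (\<Sum>i\<in>UNIV. lamstar $ i *\<^sub>R Hg i phistar)"
  interpret kkt_perturbation g Jg H phistar phi lamstar lam L
    using g_deriv active active_star H_pd W_inv S1 S2 L_pos
    by unfold_locales (simp_all add: H_def Let_def)
  define Bn where "Bn = opnorm2 ((mat 1 - Q ** transpose Q) ** minvsqrt H ** minvsqrt Sigma)"
  have PG: "minvsqrt H ** transpose (Jg phistar) ** matrix_inv W ** Jg phistar ** minvsqrt H
              = Q ** transpose Q"
    by (simp add: gram_projection[OF H_pd W_invertible])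
  have "wnorm (phi - phistar) (matrix_inv Sigma) \<le> 4 * Bn\<^sup>2 * wnorm (w - wstar) Sigma"
    using sigma_estimate[OF Sigma_pd] hyp1 hyp2
    by (simp add: Let_def H_def[symmetric] PG Bn_def kkt kkt_star)
  also have "\<dots> \<le> 5 * Bn\<^sup>2 * wnorm (w - wstar) Sigma"
    by (intro mult_right_mono wnorm_nonneg pos_def_imp_psd[OF Sigma_pd]) simp_all
  finally have first: "wnorm (phi - phistar) (matrix_inv Sigma) \<le> 5 * Bn\<^sup>2 * wnorm (w - wstar) Sigma" .
  have second: "w \<bullet> (phi - phistar) \<le> 5 * Bn\<^sup>2 * (wnorm (w - wstar) Sigma)\<^sup>2"
    using phistar_max[OF phi_feas]
    by (intro inner_le_of_wnorm_bound[OF Sigma_pd _ first]) (simp add: inner_diff_right inner_commute)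
  have "lamstar \<noteq> 0"
    using H_pd by (auto simp: H_def pos_def_mat_def intro: exI[of _ "axis undefined 1"])
  then have "0 < wnorm wstar Sigma"
    using Sigma_pd eq_0_of_transpose_mult_eq_0[OF W_invertible]
    by (auto simp: kkt_star wnorm_def pos_def_mat_def)
  then show ?thesis
    using first second
    by (simp add: Let_def H_def[symmetric] PG Bn_def[symmetric] power2_eq_square field_simps)
qed

end
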